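(* Let $\mathbb{A}$ be an epistemic Heyting algebra, $a\in\mathbb{A}$, $b\in\mathbb{A}$ and $i\in\mathsf{Ag}$. The following are equivalent: (1) $[b]\in\mathsf{Min}_i(\mathbb{A}^a)$; (2) $[b]=[b']$ for a unique $b'\in\mathsf{Min}_i(\mathbb{A})$ such that $b'\wedge a\neq\bot$.
   Context: Fix a set $\mathsf{Ag}$ of agents. A monadic Heyting algebra is a Heyting algebra $\mathbb{L}$ with, for each $i\in\mathsf{Ag}$, monotone unary operations $\lozenge_i,\Box_i$ such that for all $a,b$: $a\leq\lozenge_i a$; $\Box_i a\leq a$; $\lozenge_i(a\vee b)\leq\lozenge_i a\vee\lozenge_i b$; $\Box_i(a\to b)\leq\Box_i a\to\Box_i b$; $\lozenge_i a\leq\Box_i\lozenge_i a$; $\lozenge_i\Box_i a\leq\Box_i a$; $\Box_i(a\to b)\leq\lozenge_i a\to\lozenge_i b$; $\lozenge_i\bot\leq\bot$; $\top\leq\Box_i\top$. An epistemic Heyting algebra is a finite monadic Heyting algebra with $\lozenge_i a\vee\neg\lozenge_i a=\top$ for all $i,a$. An element $c$ is $i$-minimal if $c\neq\bot$, $\lozenge_i c=c$, and whenever $d<c$ and $\lozenge_i d=d$ then $d=\bot$; $\mathsf{Min}_i(\cdot)$ is the set of $i$-minimal elements. The pseudo-quotient algebra $\mathbb{A}^a$: $b\cong_a c$ iff $b\wedge a=c\wedge a$; carrier the quotient Heyting algebra $\mathbb{L}/{\cong_a}$ with classes $[c]$ ($[b]\leq[c]$ iff $b\wedge a\leq c\wedge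 a$); $\lozenge^a_i[b]=[\lozenge_i(b\wedge a)]$, $\Box^a_i[b]=[\Box_i(a\to b)]$; $i$-minimality in $\mathbb{A}^a$ is w.r.t. $\lozenge^a_i$. *)

theory Defs
  imports Main
begin

unbundle lattice_syntax

text \<open>A Heyting algebra is rendered as a bounded lattice (type class) together with an
  implication operation satisfying residuation (distributivity is then automatic).\<close>

definition heyting_imp :: "('a::bounded_lattice \<Rightarrow> 'a \<Rightarrow> 'a) \<Rightarrow> bool" where
  "heyting_imp imp \<longleftrightarrow> (\<forall>x y z. z \<sqinter> x \<le> y \<longleftrightarrow> z \<le> imp x y)"

definition monadic_heyting_algebra ::
  "('a::bounded_lattice \<Rightarrow> 'a \<Rightarrow> 'a) \<Rightarrow> ('i \<Rightarrow> 'a \<Rightarrow> 'a) \<Rightarrow> ('i \<Rightarrow> 'a \<Rightarrow> 'a) \<Rightarrow> bool" where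
  "monadic_heyting_algebra imp dia box \<longleftrightarrow>
     heyting_imp imp \<and>
     (\<forall>i. mono (dia i) \<and> mono (box i) \<and>
       (\<forall>a b.
          a \<le> dia i a \<and>
          box i a \<le> a \<and>
          dia i (a \<squnion> b) \<le> dia i a \<squnion> dia i b \<and>
          box i (imp a b) \<le> imp (box i a) (box i b) \<and>
          dia i a \<le> box i (dia i a) \<and>
          dia i (box i a) \<le> box i a \<and>
          box i (imp a b) \<le> imp (dia i a) (dia i b)) \<and>
       dia i bot \<le> bot \<and>
       top \<le> box i top)"

definition epistemic_heyting_algebra ::
  "('a::{finite,bounded_lattice} \<Rightarrow> 'a \<Rightarrow> 'a) \<Rightarrow> ('i \<Rightarrow> 'a \<Rightarrow> 'a) \<Rightarrow> ('i \<Rightarrow> 'a \<Rightarrow> 'a) \<Rightarrow> bool" where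
  "epistemic_heyting_algebra imp dia box \<longleftrightarrow>
     monadic_heyting_algebra imp dia box \<and>
     (\<forall>i a. dia i a \<squnion> imp (dia i a) bot = top)"

text \<open>Generic i-minimality in a (quotient) poset presented by its equality eq,
  order le, diamond operation dia and bottom element bt.\<close>

definition minimal_wrt :: "('a \<Rightarrow> 'a \<Rightarrow> bool) \<Rightarrow> ('a \<Rightarrow> 'a \<Rightarrow> bool) \<Rightarrow> ('a \<Rightarrow> 'a) \<Rightarrow> 'a \<Rightarrow> 'a \<Rightarrow> bool" where
  "minimal_wrt eq le dia bt c \<longleftrightarrow>
     \<not> eq c bt \<and> eq (dia c) c \<and>
     (\<forall>d. (le d c \<and> \<not> eq d c) \<and> eq (dia d) d \<longrightarrow> eq d bt)"

definition Min_alg :: "('i \<Rightarrow> 'a::bounded_lattice \<Rightarrow> 'a) \<Rightarrow> 'i \<Rightarrow> 'a set" where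
  "Min_alg dia i = {c. minimal_wrt (=) (\<le>) (dia i) bot c}"

text \<open>Pseudo-quotient A^a, presented on representatives: classes [b] are represented by b,
  with [b] = [c] iff b \<sqinter> a = c \<sqinter> a, [b] \<le> [c] iff b \<sqinter> a \<le> c \<sqinter> a,
  dia^a_i [b] = [dia_i (b \<sqinter> a)], box^a_i [b] = [box_i (a \<rightarrow> b)].\<close>

definition pq_eq :: "'a::bounded_lattice \<Rightarrow> 'a \<Rightarrow> 'a \<Rightarrow> bool" where
  "pq_eq a b c \<longleftrightarrow> b \<sqinter> a = c \<sqinter> a"

definition pq_le :: "'a::bounded_lattice \<Rightarrow> 'a \<Rightarrow> 'a \<Rightarrow> bool" where
  "pq_le a b c \<longleftrightarrow> b \<sqinter> a \<le> c \<sqinter> a"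

definition pq_dia :: "('i \<Rightarrow> 'a::bounded_lattice \<Rightarrow> 'a) \<Rightarrow> 'a \<Rightarrow> 'i \<Rightarrow> 'a \<Rightarrow> 'a" where
  "pq_dia dia a i b = dia i (b \<sqinter> a)"

definition pq_box :: "('a \<Rightarrow> 'a \<Rightarrow> 'a) \<Rightarrow> ('i \<Rightarrow> 'a \<Rightarrow> 'a) \<Rightarrow> 'a \<Rightarrow> 'i \<Rightarrow> 'a \<Rightarrow> 'a" where
  "pq_box imp box a i b = box i (imp a b)"

definition pq_min :: "('i \<Rightarrow> 'a::bounded_lattice \<Rightarrow> 'a) \<Rightarrow> 'a \<Rightarrow> 'i \<Rightarrow> 'a \<Rightarrow> bool" where
  "pq_min dia a i b \<longleftrightarrow> minimal_wrt (pq_eq a) (pq_le a) (pq_dia dia a i) bot b"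

end

theory Submission
  imports Defs
begin

unbundle lattice_syntax

text \<open>Every \<open>i\<close>-minimal element \<open>c\<close> is an atom among the \<open>\<lozenge>\<^sub>i\<close>-closed elements, so
  \<open>\<lozenge>\<^sub>i z = c\<close> for every nonzero \<open>z \<le> c\<close>, and distinct ones are disjoint. If \<open>[b]\<close> is
  \<open>i\<close>-minimal in the pseudo-quotient, an \<open>i\<close>-minimal \<open>c \<le> \<lozenge>\<^sub>i(b \<sqinter> a)\<close> meeting \<open>b \<sqinter> a\<close>
  exists by finiteness, and minimality of \<open>[b]\<close> forces \<open>[c] = [b]\<close>; disjointness gives
  uniqueness. Conversely, if \<open>[b] = [c]\<close> with \<open>c\<close> minimal, any \<open>\<lozenge>\<^sup>a\<^sub>i\<close>-closed \<open>[d] < [b]\<close>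
  yields the closed element \<open>\<lozenge>\<^sub>i(d \<sqinter> a) < c\<close>, which must vanish.\<close>

lemma pq_min_iff:
  "pq_min dia a i b \<longleftrightarrow>
     b \<sqinter> a \<noteq> bot \<and> dia i (b \<sqinter> a) \<sqinter> a = b \<sqinter> a \<and>
     (\<forall>d. d \<sqinter> a \<le> b \<sqinter> a \<and> d \<sqinter> a \<noteq> b \<sqinter> a \<and> dia i (d \<sqinter> a) \<sqinter> a = d \<sqinter> a
          \<longrightarrow> d \<sqinter> a = bot)"
  by (auto simp: pq_min_def minimal_wrt_def pq_eq_def pq_le_def pq_dia_def)

locale monadic_heyting =
  fixes imp :: "'a::bounded_lattice \<Rightarrow> 'a \<Rightarrow> 'a"
    and dia box :: "'i \<Rightarrow> 'a \<Rightarrow> 'a"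
  assumes monadic: "monadic_heyting_algebra imp dia box"
begin

lemma residuation: "z \<sqinter> x \<le> y \<longleftrightarrow> z \<le> imp x y"
  using monadic unfolding monadic_heyting_algebra_def heyting_imp_def by blast

lemma dia_mono: "x \<le> y \<Longrightarrow> dia i x \<le> dia i y"
  using monadic unfolding monadic_heyting_algebra_def mono_def by blast

lemma box_mono: "x \<le> y \<Longrightarrow> box i x \<le> box i y"
  using monadic unfolding monadic_heyting_algebra_def mono_def by blast

lemma dia_extensive: "x \<le> dia i x"
  using monadic unfolding monadic_heyting_algebra_def by blast

lemma box_deflationary: "box i x \<le> x"
  using monadic unfolding monadic_heyting_algebra_def by blast

lemma dia_le_box_dia: "dia i x \<le> box i (dia i x)"
  using monadic unfolding monadic_heyting_algebra_def by blast

lemma dia_box_le_box: "dia i (box i x) \<le> box i x"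
  using monadic unfolding monadic_heyting_algebra_def by blast

lemma box_imp_le_imp_dia: "box i (imp x y) \<le> imp (dia i x) (dia i y)"
  using monadic unfolding monadic_heyting_algebra_def by blast

lemma dia_bot [simp]: "dia i bot = bot"
  using monadic unfolding monadic_heyting_algebra_def by (meson bot.extremum_uniqueI)

lemma box_eq_if_dia_closed: "dia i x = x \<Longrightarrow> box i x = x"
  using box_deflationary[of i x] dia_le_box_dia[of i x] by simp

lemma dia_idem [simp]: "dia i (dia i x) = dia i x"
proof -
  have "box i (dia i x) = dia i x"
    using box_deflationary dia_le_box_dia by (simp add: antisym)
  then have "dia i (dia i x) \<le> dia i x"
    using dia_box_le_box by metis
  then show ?thesis
    using dia_extensive by (simp add: antisym)
qed

lemma dia_inf_closed:
  assumes "dia i x = x" and "dia i y = y"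
  shows "dia i (x \<sqinter> y) = x \<sqinter> y"
  using dia_mono[of "x \<sqinter> y" x i] dia_mono[of "x \<sqinter> y" y i] dia_extensive[of "x \<sqinter> y" i] assms
  by (simp add: antisym)

lemma dia_pseudocomplement_closed:
  assumes closed: "dia i x = x"
  shows "dia i (imp x bot) = imp x bot"
proof -
  have "imp x bot \<sqinter> x \<le> bot"
    using residuation[of "imp x bot" x bot] by simp
  then have "x \<le> imp (imp x bot) bot"
    using residuation[of x "imp x bot" bot] by (simp add: inf_commute)
  then have "box i x \<le> box i (imp (imp x bot) bot)"
    by (rule box_mono)
  also have "\<dots> \<le> imp (dia i (imp x bot)) bot"
    using box_imp_le_imp_dia[of i "imp x bot" bot] by simp
  finally have "dia i (imp x bot) \<sqinter> x \<le> bot"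
    using box_eq_if_dia_closed[OF closed] residuation by (simp add: inf_commute)
  then have "dia i (imp x bot) \<le> imp x bot"
    using residuation by blast
  then show ?thesis
    using dia_extensive by (simp add: antisym)
qed

lemma Min_alg_closed: "c \<in> Min_alg dia i \<Longrightarrow> dia i c = c"
  by (simp add: Min_alg_def minimal_wrt_def)

lemma Min_alg_nonbot: "c \<in> Min_alg dia i \<Longrightarrow> c \<noteq> bot"
  by (simp add: Min_alg_def minimal_wrt_def)

lemma Min_alg_minimal:
  "c \<in> Min_alg dia i \<Longrightarrow> d \<le> c \<Longrightarrow> d \<noteq> c \<Longrightarrow> dia i d = d \<Longrightarrow> d = bot"
  by (simp add: Min_alg_def minimal_wrt_def)

lemma Min_alg_inf_closed_cases:
  assumes c: "c \<in> Min_alg dia i" and closed: "dia i y = y"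
  shows "c \<sqinter> y = bot \<or> c \<le> y"
proof (cases "c \<sqinter> y = c")
  case True
  then show ?thesis
    by (simp add: le_iff_inf)
next
  case False
  then show ?thesis
    using Min_alg_minimal[OF c inf_le1] dia_inf_closed[OF Min_alg_closed[OF c] closed] by simp
qed

lemma dia_eq_Min_alg:
  assumes c: "c \<in> Min_alg dia i" and "z \<le> c" and "z \<noteq> bot"
  shows "dia i z = c"
proof (rule ccontr)
  assume "dia i z \<noteq> c"
  moreover have "dia i z \<le> c"
    using dia_mono[OF \<open>z \<le> c\<close>, of i] Min_alg_closed[OF c] by simp
  ultimately have "dia i z = bot"
    using Min_alg_minimal[OF c] by simp
  then show False
    using dia_extensive[of z i] \<open>z \<noteq> bot\<close> by (simp add: bot_unique)
qed

lemma Min_alg_disjoint: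
  assumes "c \<in> Min_alg dia i" and "c' \<in> Min_alg dia i" and "c \<noteq> c'"
  shows "c \<sqinter> c' = bot"
proof (rule ccontr)
  assume "c \<sqinter> c' \<noteq> bot"
  then have "c \<le> c'" and "c' \<le> c"
    using Min_alg_inf_closed_cases[OF assms(1) Min_alg_closed[OF assms(2)]]
      Min_alg_inf_closed_cases[OF assms(2) Min_alg_closed[OF assms(1)]]
    by (simp_all add: inf_commute)
  with \<open>c \<noteq> c'\<close> show False
    by simp
qed

lemma Min_alg_representative_unique:
  assumes "c \<in> Min_alg dia i" and "c' \<in> Min_alg dia i"
    and "c \<sqinter> a \<noteq> bot" and "c \<sqinter> a = c' \<sqinter> a"
  shows "c = c'"
proof (rule ccontr)
  assume "c \<noteq> c'"
  then have "c \<sqinter> c' = bot"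
    using Min_alg_disjoint assms(1,2) by blast
  moreover have "(c \<sqinter> a) \<sqinter> (c' \<sqinter> a) = (c \<sqinter> c') \<sqinter> a"
    by (simp add: inf_aci)
  ultimately have "(c \<sqinter> a) \<sqinter> (c' \<sqinter> a) = bot"
    by simp
  then show False
    using assms(3,4) by simp
qed

lemma pq_min_if_Min_alg_representative:
  assumes c: "c \<in> Min_alg dia i" and "c \<sqinter> a \<noteq> bot" and rep: "pq_eq a b c"
  shows "pq_min dia a i b"
  unfolding pq_min_iff
proof (intro conjI allI impI)
  have ba: "b \<sqinter> a = c \<sqinter> a"
    using rep by (simp add: pq_eq_def)
  have dia_ca: "dia i (c \<sqinter> a) = c"
    using dia_eq_Min_alg[OF c inf_le1 \<open>c \<sqinter> a \<noteq> bot\<close>] .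
  show "b \<sqinter> a \<noteq> bot" and "dia i (b \<sqinter> a) \<sqinter> a = b \<sqinter> a"
    using ba dia_ca \<open>c \<sqinter> a \<noteq> bot\<close> by simp_all
  fix d
  assume d: "d \<sqinter> a \<le> b \<sqinter> a \<and> d \<sqinter> a \<noteq> b \<sqinter> a \<and> dia i (d \<sqinter> a) \<sqinter> a = d \<sqinter> a"
  have "dia i (d \<sqinter> a) \<le> c"
    using dia_mono[of "d \<sqinter> a" "c \<sqinter> a" i] d ba dia_ca by simp
  moreover have "dia i (d \<sqinter> a) \<noteq> c"
    using d ba by auto
  ultimately have "dia i (d \<sqinter> a) = bot"
    using Min_alg_minimal[OF c] by simp
  then show "d \<sqinter> a = bot"
    using d by simp
qed

end

locale finite_monadic_heyting = monadic_heyting imp dia box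
  for imp :: "'a::{finite,bounded_lattice} \<Rightarrow> 'a \<Rightarrow> 'a"
    and dia box :: "'i \<Rightarrow> 'a \<Rightarrow> 'a"
begin

lemma exists_Min_alg_below:
  assumes "dia i y = y" and "y \<noteq> bot"
  shows "\<exists>c \<in> Min_alg dia i. c \<le> y"
proof -
  define S where "S = {d. dia i d = d \<and> d \<noteq> bot \<and> d \<le> y}"
  have "y \<in> S"
    using assms by (simp add: S_def)
  then obtain c where "c \<in> S" and c_minimal: "\<forall>d \<in> S. d \<le> c \<longrightarrow> c = d"
    using finite_has_minimal[OF finite[of S]] by blast
  have "d = bot" if "d \<le> c" "d \<noteq> c" "dia i d = d" for d
  proof (rule ccontr)
    assume "d \<noteq> bot"
    moreover have "d \<le> y"
      using \<open>d \<le> c\<close> \<open>c \<in> S\<close> unfolding S_def by (blast intro: order_trans)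
    ultimately have "d \<in> S"
      using \<open>dia i d = d\<close> by (simp add: S_def)
    with c_minimal that show False
      by blast
  qed
  with \<open>c \<in> S\<close> have "c \<in> Min_alg dia i"
    unfolding S_def Min_alg_def minimal_wrt_def by auto
  with \<open>c \<in> S\<close> show ?thesis
    unfolding S_def by blast
qed

lemma exists_Min_alg_meeting:
  assumes "x \<noteq> bot"
  shows "\<exists>c \<in> Min_alg dia i. c \<le> dia i x \<and> c \<sqinter> x \<noteq> bot"
proof -
  have "dia i x \<noteq> bot"
    using dia_extensive[of x i] assms by (auto simp: bot_unique)
  then obtain c where c: "c \<in> Min_alg dia i" and "c \<le> dia i x"
    using exists_Min_alg_below[of i "dia i x"] by auto
  have "c \<sqinter> x \<noteq> bot"
  proof
    assume "c \<sqinter> x = bot"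
    then have "x \<le> imp c bot"
      using residuation[of x c bot] by (simp add: inf_commute)
    then have "dia i x \<le> imp c bot"
      using dia_mono[of x "imp c bot" i] dia_pseudocomplement_closed[OF Min_alg_closed[OF c]]
      by simp
    then have "c \<sqinter> c \<le> bot"
      using \<open>c \<le> dia i x\<close> residuation[of c c bot] by simp
    then show False
      using Min_alg_nonbot[OF c] by (simp add: bot_unique)
  qed
  with c \<open>c \<le> dia i x\<close> show ?thesis
    by blast
qed

lemma Min_alg_representative_if_pq_min:
  assumes "pq_min dia a i b"
  shows "\<exists>c \<in> Min_alg dia i. c \<sqinter> a \<noteq> bot \<and> pq_eq a b c"
proof -
  have "b \<sqinter> a \<noteq> bot" and closed: "dia i (b \<sqinter> a) \<sqinter> a = b \<sqinter> a"
    and minimal: "\<And>d. d \<sqinter> a \<le> b \<sqinter> a \<Longrightarrow> d \<sqinter> a \<noteq> b \<sqinter> a \<Longrightarrow>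
                    dia i (d \<sqinter> a) \<sqinter> a = d \<sqinter> a \<Longrightarrow> d \<sqinter> a = bot"
    using assms unfolding pq_min_iff by blast+
  obtain c where c: "c \<in> Min_alg dia i" and "c \<le> dia i (b \<sqinter> a)"
    and "c \<sqinter> (b \<sqinter> a) \<noteq> bot"
    using exists_Min_alg_meeting[OF \<open>b \<sqinter> a \<noteq> bot\<close>] by blast
  have below: "c \<sqinter> a \<le> b \<sqinter> a"
    using inf_mono[OF \<open>c \<le> dia i (b \<sqinter> a)\<close> order_refl[of a]] closed by simp
  have "c \<sqinter> (b \<sqinter> a) = b \<sqinter> (c \<sqinter> a)"
    by (simp add: inf_aci)
  then have "c \<sqinter> a \<noteq> bot"
    using \<open>c \<sqinter> (b \<sqinter> a) \<noteq> bot\<close> by auto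
  then have "dia i (c \<sqinter> a) = c"
    using dia_eq_Min_alg[OF c inf_le1] by blast
  then have "c \<sqinter> a = b \<sqinter> a"
    using minimal[OF below] \<open>c \<sqinter> a \<noteq> bot\<close> by auto
  with \<open>c \<sqinter> a \<noteq> bot\<close> show ?thesis
    by (intro bexI[OF _ c]) (simp add: pq_eq_def)
qed

end

theorem proposition9:
  fixes imp :: "'a::{finite,bounded_lattice} \<Rightarrow> 'a \<Rightarrow> 'a"
    and dia box :: "'i \<Rightarrow> 'a \<Rightarrow> 'a"
    and a b :: 'a and i :: 'i
  assumes "epistemic_heyting_algebra imp dia box"
  shows "pq_min dia a i b \<longleftrightarrow>
           (\<exists>!b'. b' \<in> Min_alg dia i \<and> b' \<sqinter> a \<noteq> bot \<and> pq_eq a b b')"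
proof -
  interpret finite_monadic_heyting imp dia box
    using assms unfolding epistemic_heyting_algebra_def by unfold_locales blast
  show ?thesis
  proof
    assume "pq_min dia a i b"
    then obtain c where c: "c \<in> Min_alg dia i" "c \<sqinter> a \<noteq> bot" "pq_eq a b c"
      by (meson Min_alg_representative_if_pq_min)
    show "\<exists>!b'. b' \<in> Min_alg dia i \<and> b' \<sqinter> a \<noteq> bot \<and> pq_eq a b b'"
    proof (rule ex1I[of _ c])
      fix c' assume c': "c' \<in> Min_alg dia i \<and> c' \<sqinter> a \<noteq> bot \<and> pq_eq a b c'"
      then have "c' \<sqinter> a = c \<sqinter> a"
        using \<open>pq_eq a b c\<close> unfolding pq_eq_def by metis
      with c' c(1) show "c' = c"
        using Min_alg_representative_unique by blast
    qed (use c in blast)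
  next
    assume "\<exists>!b'. b' \<in> Min_alg dia i \<and> b' \<sqinter> a \<noteq> bot \<and> pq_eq a b b'"
    then obtain c where "c \<in> Min_alg dia i" "c \<sqinter> a \<noteq> bot" "pq_eq a b c"
      by (meson ex1_implies_ex)
    then show "pq_min dia a i b"
      by (rule pq_min_if_Min_alg_representative)
  qed
qed

end
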